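(* Let $G$ and $H$ be two nontrivial connected graphs with orders $m$ and $n$ respectively. Then $$C_{cc}(G\Box H)=\max\{n\cdot C_{cc}(G),\ m\cdot C_{cc}(H)\}.$$
   Context: All graphs are finite, simple and undirected. For a graph $G$ and $S\subseteq V(G)$, the cycle interval $\langle S\rangle$ consists of the vertices of $S$ together with every vertex $w\in V(G)\setminus S$ such that $G[S\cup\{w\}]$ contains a cycle through $w$; $S$ is cycle convex if $\langle S\rangle=S$. The cycle convexity number $C_{cc}(G)$ is the maximum cardinality of a proper (i.e. $\neq V(G)$) cycle convex subset of $V(G)$. The Cartesian product $G\Box H$ has vertex set $V(G)\times V(H)$, with $(g_1,h_1)\sim(g_2,h_2)$ iff ($g_1\sim g_2$ and $h_1=h_2$) or ($g_1=g_2$ and $h_1\sim h_2$). A graph is nontrivial if it has at least two vertices. *)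

theory Defs
  imports Main
begin

definition graph :: "'a set \<Rightarrow> ('a \<Rightarrow> 'a \<Rightarrow> bool) \<Rightarrow> bool" where
  "graph V E \<longleftrightarrow> finite V \<and> (\<forall>x y. E x y \<longrightarrow> x \<in> V \<and> y \<in> V)
     \<and> (\<forall>x y. E x y \<longrightarrow> E y x) \<and> (\<forall>x. \<not> E x x)"

definition walk :: "('a \<Rightarrow> 'a \<Rightarrow> bool) \<Rightarrow> 'a list \<Rightarrow> bool" where
  "walk E xs \<longleftrightarrow> (\<forall>i. Suc i < length xs \<longrightarrow> E (xs ! i) (xs ! Suc i))"

definition connected_graph :: "'a set \<Rightarrow> ('a \<Rightarrow> 'a \<Rightarrow> bool) \<Rightarrow> bool" where
  "connected_graph V E \<longleftrightarrow> V \<noteq> {} \<and>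
     (\<forall>x\<in>V. \<forall>y\<in>V. \<exists>xs. xs \<noteq> [] \<and> hd xs = x \<and> last xs = y \<and> walk E xs)"

definition cycle_through :: "('a \<Rightarrow> 'a \<Rightarrow> bool) \<Rightarrow> 'a set \<Rightarrow> 'a \<Rightarrow> bool" where
  "cycle_through E S w \<longleftrightarrow> (\<exists>cs. distinct cs \<and> length cs \<ge> 3 \<and> set cs \<subseteq> S
      \<and> hd cs = w \<and> walk E cs \<and> E (last cs) (hd cs))"

definition cycle_interval :: "'a set \<Rightarrow> ('a \<Rightarrow> 'a \<Rightarrow> bool) \<Rightarrow> 'a set \<Rightarrow> 'a set" where
  "cycle_interval V E S = S \<union> {w \<in> V - S. cycle_through E (S \<union> {w}) w}"

definition cycle_convex :: "'a set \<Rightarrow> ('a \<Rightarrow> 'a \<Rightarrow> bool) \<Rightarrow> 'a set \<Rightarrow> bool" where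
  "cycle_convex V E S \<longleftrightarrow> S \<subseteq> V \<and> cycle_interval V E S = S"

definition C_cc :: "'a set \<Rightarrow> ('a \<Rightarrow> 'a \<Rightarrow> bool) \<Rightarrow> nat" where
  "C_cc V E = Max {card S | S. S \<subseteq> V \<and> S \<noteq> V \<and> cycle_convex V E S}"

definition cart_vertices :: "'a set \<Rightarrow> 'b set \<Rightarrow> ('a \<times> 'b) set" where
  "cart_vertices V W = V \<times> W"

definition cart_edges :: "('a \<Rightarrow> 'a \<Rightarrow> bool) \<Rightarrow> ('b \<Rightarrow> 'b \<Rightarrow> bool)
    \<Rightarrow> ('a \<times> 'b) \<Rightarrow> ('a \<times> 'b) \<Rightarrow> bool" where
  "cart_edges E F p q \<longleftrightarrow>
     (E (fst p) (fst q) \<and> snd p = snd q) \<or> (fst p = fst q \<and> F (snd p) (snd q))"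

end

theory Submission
  imports Defs
begin

text \<open>
  If S is a proper cycle convex set of G, then S \<times> V(H) is one of G \<box> H: a cycle through
  (g, h) with g \<notin> S enters and leaves (g, h) along two G-edges of the layer G \<times> {h}, and
  projecting the rest of the cycle to G gives a path in S between two distinct neighbours
  of g, i.e. a cycle through g in S \<union> {g}.

  Conversely, every layer of a cycle convex set T of G \<box> H is cycle convex in its factor,
  since the layers are copies of the factors inside the product. If T contained a full
  G-layer and a full H-layer, the 4-cycles (a, c), (b, c), (b, d), (a, d) would spread
  membership along the edges of both connected factors and force T = V(G \<box> H). So for a
  proper T all G-layers, or all H-layers, are proper, and summing their sizes bounds |T|.
  The isomorphism G \<box> H \<cong> H \<box> G exchanges the two cases.
\<close>

lemma walk_Nil [simp]: "walk E []"
  and walk_single [simp]: "walk E [x]"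
  by (simp_all add: walk_def)

lemma walk_Cons_Cons [simp]: "walk E (x # y # zs) \<longleftrightarrow> E x y \<and> walk E (y # zs)"
proof
  assume "walk E (x # y # zs)"
  then show "E x y \<and> walk E (y # zs)"
    unfolding walk_def by (metis Suc_less_eq length_Cons nth_Cons_0 nth_Cons_Suc zero_less_Suc)
next
  assume xy: "E x y \<and> walk E (y # zs)"
  show "walk E (x # y # zs)"
    unfolding walk_def
  proof (intro allI impI)
    fix i
    assume "Suc i < length (x # y # zs)"
    then show "E ((x # y # zs) ! i) ((x # y # zs) ! Suc i)"
      using xy unfolding walk_def by (cases i) auto
  qed
qed

lemma walk_ConsD: "walk E (x # xs) \<Longrightarrow> walk E xs"
  by (cases xs) auto

lemma walk_appendD2: "walk E (xs @ ys) \<Longrightarrow> walk E ys"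
  by (induction xs) (auto dest: walk_ConsD)

lemma walk_map:
  assumes "walk E xs" and "\<And>x y. E x y \<Longrightarrow> E' (f x) (f y)"
  shows "walk E' (map f xs)"
  using assms by (induction xs rule: induct_list012) auto

lemma walk_reflcl_contains_path:
  assumes "walk (\<lambda>x y. E x y \<or> x = y) xs" and "xs \<noteq> []"
  shows "\<exists>ys. distinct ys \<and> ys \<noteq> [] \<and> hd ys = hd xs \<and> last ys = last xs
           \<and> walk E ys \<and> set ys \<subseteq> set xs"
  using assms
proof (induction xs rule: induct_list012)
  case (2 x)
  show ?case by (intro exI[of _ "[x]"]) auto
next
  case (3 x y zs)
  then obtain ys where ys: "distinct ys" "ys \<noteq> []" "hd ys = y" "last ys = last (y # zs)"
    "walk E ys" "set ys \<subseteq> set (y # zs)" by auto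
  show ?case
  proof (cases "x \<in> set ys")
    case True
    \<comment> \<open>shortcut the loop back to the earlier visit of x\<close>
    then obtain us vs where ys_split: "ys = us @ x # vs" by (meson split_list)
    show ?thesis
      by (intro exI[of _ "x # vs"]) (use ys ys_split walk_appendD2[of E us "x # vs"] in auto)
  next
    case False
    then obtain ys' where ys': "ys = y # ys'" using ys by (cases ys) auto
    with False "3.prems"(1) have "E x y" by auto
    then show ?thesis by (intro exI[of _ "x # ys"]) (use ys ys' False in auto)
  qed
qed auto

lemma connected_graph_induct:
  assumes "connected_graph V E" and "x \<in> V" and "y \<in> V" and "P x"
    and step: "\<And>a b. E a b \<Longrightarrow> P a \<Longrightarrow> P b"
  shows "P y"
proof -
  obtain xs where xs: "xs \<noteq> []" "hd xs = x" "last xs = y" "walk E xs"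
    using assms(1-3) unfolding connected_graph_def by blast
  have "P (last (a # as))" if "walk E (a # as)" "P a" for a as
    using that
  proof (induction as arbitrary: a)
    case (Cons b as)
    then have "E a b" "P a" by simp_all
    then have "P b" by (rule step)
    with Cons show ?case by simp
  qed simp
  then show ?thesis using xs \<open>P x\<close> by (cases xs) auto
qed

lemma cycle_through_mono: "S \<subseteq> S' \<Longrightarrow> cycle_through E S w \<Longrightarrow> cycle_through E S' w"
  unfolding cycle_through_def by blast

lemma cycle_through_image:
  assumes "cycle_through E S w" and "inj f" and "\<And>x y. E x y \<Longrightarrow> E' (f x) (f y)"
  shows "cycle_through E' (f ` S) (f w)"
proof -
  obtain cs where cs: "distinct cs" "length cs \<ge> 3" "set cs \<subseteq> S" "hd cs = w"
    "walk E cs" "E (last cs) (hd cs)"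
    using assms(1) unfolding cycle_through_def by blast
  then have "cs \<noteq> []" by auto
  show ?thesis
    unfolding cycle_through_def
    by (intro exI[of _ "map f cs"])
      (use cs \<open>cs \<noteq> []\<close> assms(2,3) in \<open>auto simp: distinct_map hd_map last_map
        inj_on_subset walk_map\<close>)
qed

lemma cycle_through_insertI:
  assumes "walk E ys" and "distinct ys" and "length ys \<ge> 2" and "set ys \<subseteq> S" and "w \<notin> S"
    and "E w (hd ys)" and "E (last ys) w"
  shows "cycle_through E (insert w S) w"
  unfolding cycle_through_def
  by (intro exI[of _ "w # ys"]) (cases ys; use assms in auto)

lemma cycle_convex_iff:
  "cycle_convex V E S \<longleftrightarrow> S \<subseteq> V \<and> (\<forall>w \<in> V - S. \<not> cycle_through E (insert w S) w)"
  unfolding cycle_convex_def cycle_interval_def by auto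

lemma cycle_convex_empty: "cycle_convex V E {}"
proof -
  have "\<not> cycle_through E {w} w" for w
  proof
    assume "cycle_through E {w} w"
    then obtain cs where "distinct cs" "length cs \<ge> 3" "set cs \<subseteq> {w}"
      unfolding cycle_through_def by blast
    then have "length cs \<le> card {w}"
      by (metis card_mono distinct_card finite.emptyI finite.insertI)
    with \<open>length cs \<ge> 3\<close> show False by simp
  qed
  then show ?thesis by (simp add: cycle_convex_iff)
qed

lemma cycle_convex_preimage:
  assumes convex: "cycle_convex V' E' T" and inj: "inj f" and "f ` V \<subseteq> V'"
    and hom: "\<And>x y. E x y \<Longrightarrow> E' (f x) (f y)"
  shows "cycle_convex V E {x \<in> V. f x \<in> T}"
  unfolding cycle_convex_iff
proof (intro conjI ballI notI)
  fix w
  assume w: "w \<in> V - {x \<in> V. f x \<in> T}"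
    and cycle: "cycle_through E (insert w {x \<in> V. f x \<in> T}) w"
  have "cycle_through E' (f ` insert w {x \<in> V. f x \<in> T}) (f w)"
    using cycle inj hom by (rule cycle_through_image)
  moreover have "f ` insert w {x \<in> V. f x \<in> T} \<subseteq> insert (f w) T"
    by blast
  ultimately have "cycle_through E' (insert (f w) T) (f w)"
    by (rule cycle_through_mono[rotated])
  moreover have "f w \<in> V' - T"
    using w \<open>f ` V \<subseteq> V'\<close> by blast
  ultimately show False
    using convex unfolding cycle_convex_iff by blast
qed blast

lemma card_le_C_cc:
  assumes "finite V" and "S \<subseteq> V" and "S \<noteq> V" and "cycle_convex V E S"
  shows "card S \<le> C_cc V E"
proof -
  have "finite {card S | S. S \<subseteq> V \<and> S \<noteq> V \<and> cycle_convex V E S}"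
    by (rule finite_subset[of _ "card ` Pow V"]) (use assms in auto)
  then show ?thesis unfolding C_cc_def by (rule Max_ge) (use assms in auto)
qed

lemma C_cc_attained:
  assumes "finite V" and "V \<noteq> {}"
  obtains S where "S \<subseteq> V" "S \<noteq> V" "cycle_convex V E S" "card S = C_cc V E"
proof -
  let ?sizes = "{card S | S. S \<subseteq> V \<and> S \<noteq> V \<and> cycle_convex V E S}"
  have "finite ?sizes"
    by (rule finite_subset[of _ "card ` Pow V"]) (use assms in auto)
  moreover have "card {} \<in> ?sizes"
    using assms cycle_convex_empty[of V E] by (intro CollectI exI[of _ "{}"]) simp
  ultimately have "Max ?sizes \<in> ?sizes"
    by (intro Max_in) auto
  then have "\<exists>S. S \<subseteq> V \<and> S \<noteq> V \<and> cycle_convex V E S \<and> card S = C_cc V E"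
    unfolding C_cc_def by auto
  with that show ?thesis by blast
qed

lemma cycle_convex_cart_swap:
  assumes "cycle_convex (V \<times> W) (cart_edges E F) T"
  shows "cycle_convex (W \<times> V) (cart_edges F E) (prod.swap ` T)"
proof -
  have "T \<subseteq> V \<times> W"
    using assms by (simp add: cycle_convex_iff)
  then have "prod.swap ` T = {x \<in> W \<times> V. prod.swap x \<in> T}"
    by (auto simp: image_iff) (metis swap_simp)
  moreover have "cycle_convex (W \<times> V) (cart_edges F E) {x \<in> W \<times> V. prod.swap x \<in> T}"
    by (rule cycle_convex_preimage[OF assms]) (auto simp: cart_edges_def)
  ultimately show ?thesis by simp
qed

lemma C_cc_cart_swap_le:
  assumes "finite V" "V \<noteq> {}" "finite W" "W \<noteq> {}"
  shows "C_cc (V \<times> W) (cart_edges E F) \<le> C_cc (W \<times> V) (cart_edges F E)"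
proof -
  obtain T where T: "T \<subseteq> V \<times> W" "T \<noteq> V \<times> W" "cycle_convex (V \<times> W) (cart_edges E F) T"
    "card T = C_cc (V \<times> W) (cart_edges E F)"
    using C_cc_attained[of "V \<times> W"] assms by blast
  have "prod.swap ` T \<noteq> W \<times> V"
  proof
    assume "prod.swap ` T = W \<times> V"
    then have "prod.swap ` prod.swap ` T = V \<times> W"
      by (simp add: product_swap)
    with T(2) show False
      by (simp add: image_image)
  qed
  moreover have "prod.swap ` T \<subseteq> W \<times> V"
    using T(1) by auto
  ultimately have "card (prod.swap ` T) \<le> C_cc (W \<times> V) (cart_edges F E)"
    using assms(1,3) by (intro card_le_C_cc cycle_convex_cart_swap T(3)) auto
  then show ?thesis
    using T(4) by (simp add: card_image)
qed

lemma cycle_convex_Times_cart: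
  assumes convex: "cycle_convex V E S"
  shows "cycle_convex (V \<times> W) (cart_edges E F) (S \<times> W)"
  unfolding cycle_convex_iff
proof (intro conjI ballI notI)
  show "S \<times> W \<subseteq> V \<times> W"
    using convex by (auto simp: cycle_convex_iff)
next
  fix p
  assume "p \<in> V \<times> W - S \<times> W"
  then obtain g h where p: "p = (g, h)" "g \<in> V" "g \<notin> S" by auto
  assume "cycle_through (cart_edges E F) (insert p (S \<times> W)) p"
  then obtain cs where cs: "distinct cs" "length cs \<ge> 3" "set cs \<subseteq> insert p (S \<times> W)"
    "hd cs = p" "walk (cart_edges E F) cs" "cart_edges E F (last cs) (hd cs)"
    unfolding cycle_through_def by blast
  then obtain q qs where cs_eq: "cs = p # q # qs" "qs \<noteq> []"
    by (auto simp: numeral_3_eq_3 Suc_le_length_iff)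
  define l where "l = last (q # qs)"
  have rest: "set (q # qs) \<subseteq> S \<times> W" "distinct (q # qs)"
    using cs(1,3) cs_eq by auto
  \<comment> \<open>both neighbours of p on the cycle lie in S \<times> W, so they are reached by edges of E\<close>
  have q: "E g (fst q)" "snd q = h"
    using cs(5) cs_eq rest p by (auto simp: cart_edges_def)
  have "l \<in> S \<times> W"
    using rest(1) l_def last_in_set[of "q # qs"] by blast
  then have l: "E (fst l) g" "snd l = h"
    using cs(4,6) cs_eq p l_def by (auto simp: cart_edges_def)
  have "q \<noteq> l"
    using rest(2) cs_eq(2) l_def by (cases qs rule: rev_cases) auto
  with q(2) l(2) have "fst q \<noteq> fst l"
    by (simp add: prod_eq_iff)
  have "walk (cart_edges E F) (q # qs)"
    using cs(5) cs_eq(1) by (simp add: walk_ConsD)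
  then have "walk (\<lambda>x y. E x y \<or> x = y) (map fst (q # qs))"
    by (rule walk_map) (auto simp: cart_edges_def)
  then obtain ys where ys: "distinct ys" "ys \<noteq> []" "hd ys = hd (map fst (q # qs))"
    "last ys = last (map fst (q # qs))" "walk E ys" "set ys \<subseteq> set (map fst (q # qs))"
    using walk_reflcl_contains_path by blast
  have ys_ends: "hd ys = fst q" "last ys = fst l"
    using ys(3,4) l_def by (simp_all add: last_map)
  have "length ys \<ge> 2"
    using ys(2) ys_ends \<open>fst q \<noteq> fst l\<close> by (cases ys; cases "tl ys") auto
  moreover have "set ys \<subseteq> S"
    using ys(6) rest(1) by force
  ultimately have "cycle_through E (insert g S) g"
    using ys(1,5) ys_ends q(1) l(1) p(3) by (intro cycle_through_insertI) auto
  with convex p(2,3) show False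
    unfolding cycle_convex_iff by blast
qed

lemma C_cc_cart_lower:
  assumes "finite V" "V \<noteq> {}" "finite W" "W \<noteq> {}"
  shows "card W * C_cc V E \<le> C_cc (V \<times> W) (cart_edges E F)"
proof -
  obtain S where S: "S \<subseteq> V" "S \<noteq> V" "cycle_convex V E S" "card S = C_cc V E"
    using C_cc_attained[OF assms(1,2)] by blast
  have "S \<times> W \<noteq> V \<times> W"
    using S(1,2) assms(4) by (metis times_eq_iff)
  then have "card (S \<times> W) \<le> C_cc (V \<times> W) (cart_edges E F)"
    using S(1) assms(1,3) by (intro card_le_C_cc cycle_convex_Times_cart S(3)) auto
  then show ?thesis
    using S(4) by (simp add: card_cartesian_product mult.commute)
qed

lemma cart_convex_square:
  assumes convex: "cycle_convex (V \<times> W) (cart_edges E F) T"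
    and "graph V E" and "graph W F" and "E a b" and "F c d"
    and "(a, c) \<in> T" and "(b, c) \<in> T" and "(a, d) \<in> T"
  shows "(b, d) \<in> T"
proof (rule ccontr)
  assume "(b, d) \<notin> T"
  have "(b, d) \<in> V \<times> W" "E b a" "F d c" "a \<noteq> b" "c \<noteq> d"
    using assms(2-5) unfolding graph_def by blast+
  have "cycle_through (cart_edges E F) (insert (b, d) T) (b, d)"
    unfolding cycle_through_def
    by (intro exI[of _ "[(b, d), (a, d), (a, c), (b, c)]"])
      (use assms(4-8) \<open>E b a\<close> \<open>F d c\<close> \<open>a \<noteq> b\<close> \<open>c \<noteq> d\<close> in \<open>auto simp: cart_edges_def\<close>)
  with convex \<open>(b, d) \<in> V \<times> W\<close> \<open>(b, d) \<notin> T\<close> show False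
    unfolding cycle_convex_iff by blast
qed

lemma cart_convex_full_row_column:
  assumes "graph V E" and "connected_graph V E" and "graph W F" and "connected_graph W F"
    and convex: "cycle_convex (V \<times> W) (cart_edges E F) T"
    and "g0 \<in> V" and column: "\<forall>h\<in>W. (g0, h) \<in> T"
    and "h0 \<in> W" and row: "\<forall>g\<in>V. (g, h0) \<in> T"
  shows "V \<times> W \<subseteq> T"
proof -
  \<comment> \<open>a full row spreads to each F-neighbour, starting at the full column and closing squares\<close>
  have row_step: "\<forall>g\<in>V. (g, d) \<in> T" if "F c d" and full_c: "\<forall>g\<in>V. (g, c) \<in> T" for c d
  proof
    fix g
    assume "g \<in> V"
    have "d \<in> W"
      using \<open>graph W F\<close> \<open>F c d\<close> unfolding graph_def by blast
    then have "(g0, d) \<in> T"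
      using column by blast
    then show "(g, d) \<in> T"
    proof (rule connected_graph_induct[OF \<open>connected_graph V E\<close> \<open>g0 \<in> V\<close> \<open>g \<in> V\<close>])
      fix a b
      assume "E a b" and "(a, d) \<in> T"
      moreover have "(a, c) \<in> T" "(b, c) \<in> T"
        using \<open>graph V E\<close> \<open>E a b\<close> full_c unfolding graph_def by blast+
      ultimately show "(b, d) \<in> T"
        using cart_convex_square[OF convex \<open>graph V E\<close> \<open>graph W F\<close> \<open>E a b\<close> \<open>F c d\<close>] by blast
    qed
  qed
  show ?thesis
  proof
    fix p
    assume "p \<in> V \<times> W"
    then obtain g h where p: "p = (g, h)" "g \<in> V" "h \<in> W" by blast
    have "\<forall>g\<in>V. (g, h) \<in> T"
      using row row_step
      by (rule connected_graph_induct[OF \<open>connected_graph W F\<close> \<open>h0 \<in> W\<close> \<open>h \<in> W\<close>])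
    with p show "p \<in> T" by blast
  qed
qed

lemma card_cart_convex_le_if_rows_proper:
  assumes "finite V" and "finite W" and convex: "cycle_convex (V \<times> W) (cart_edges E F) T"
    and no_full_row: "\<forall>h\<in>W. \<exists>g\<in>V. (g, h) \<notin> T"
  shows "card T \<le> card W * C_cc V E"
proof -
  have row_le: "card {g \<in> V. (g, h) \<in> T} \<le> C_cc V E" if "h \<in> W" for h
  proof (rule card_le_C_cc[OF \<open>finite V\<close>])
    show "cycle_convex V E {g \<in> V. (g, h) \<in> T}"
      by (rule cycle_convex_preimage[OF convex]) (use that in \<open>auto simp: inj_def cart_edges_def\<close>)
  qed (use no_full_row that in blast)+
  have "T \<subseteq> V \<times> W"
    using convex by (simp add: cycle_convex_iff)
  then have "card T = card (\<Union>h\<in>W. {g \<in> V. (g, h) \<in> T} \<times> {h})"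
    by (intro arg_cong[where f = card]) blast
  also have "\<dots> \<le> (\<Sum>h\<in>W. card ({g \<in> V. (g, h) \<in> T} \<times> {h}))"
    by (rule card_UN_le[OF \<open>finite W\<close>])
  also have "\<dots> = (\<Sum>h\<in>W. card {g \<in> V. (g, h) \<in> T})"
    by (simp add: card_cartesian_product)
  also have "\<dots> \<le> card W * C_cc V E"
    using sum_bounded_above[of W _ "C_cc V E"] row_le by simp
  finally show ?thesis .
qed

lemma C_cc_cart_upper:
  assumes "graph V E" and "connected_graph V E" and "V \<noteq> {}"
    and "graph W F" and "connected_graph W F" and "W \<noteq> {}"
  shows "C_cc (V \<times> W) (cart_edges E F) \<le> max (card W * C_cc V E) (card V * C_cc W F)"
proof -
  have fin: "finite V" "finite W"
    using assms unfolding graph_def by auto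
  obtain T where T: "T \<subseteq> V \<times> W" "T \<noteq> V \<times> W" "cycle_convex (V \<times> W) (cart_edges E F) T"
    "card T = C_cc (V \<times> W) (cart_edges E F)"
    using C_cc_attained[of "V \<times> W"] fin assms(3,6) by blast
  then have "(\<forall>h\<in>W. \<exists>g\<in>V. (g, h) \<notin> T) \<or> (\<forall>g\<in>V. \<exists>h\<in>W. (g, h) \<notin> T)"
    using cart_convex_full_row_column[OF assms(1,2,4,5) T(3)] by blast
  then have "card T \<le> max (card W * C_cc V E) (card V * C_cc W F)"
  proof
    assume "\<forall>h\<in>W. \<exists>g\<in>V. (g, h) \<notin> T"
    then show ?thesis
      using card_cart_convex_le_if_rows_proper[OF fin T(3)] by simp
  next
    assume "\<forall>g\<in>V. \<exists>h\<in>W. (g, h) \<notin> T"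
    then have "\<forall>g\<in>V. \<exists>h\<in>W. (h, g) \<notin> prod.swap ` T"
      by auto
    then have "card (prod.swap ` T) \<le> card V * C_cc W F"
      using card_cart_convex_le_if_rows_proper[OF fin(2,1) cycle_convex_cart_swap[OF T(3)]]
      by blast
    then show ?thesis
      by (simp add: card_image)
  qed
  with T(4) show ?thesis
    by simp
qed

theorem mainTheorem12:
  fixes V :: "'a set" and E :: "'a \<Rightarrow> 'a \<Rightarrow> bool"
    and W :: "'b set" and F :: "'b \<Rightarrow> 'b \<Rightarrow> bool"
  assumes "graph V E" and "connected_graph V E" and "card V \<ge> 2"
    and "graph W F" and "connected_graph W F" and "card W \<ge> 2"
  shows "C_cc (cart_vertices V W) (cart_edges E F)
           = max (card W * C_cc V E) (card V * C_cc W F)"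
proof -
  have fin: "finite V" "finite W" and nonempty: "V \<noteq> {}" "W \<noteq> {}"
    using assms unfolding graph_def by auto
  have "card V * C_cc W F \<le> C_cc (W \<times> V) (cart_edges F E)"
    using C_cc_cart_lower fin nonempty by blast
  also have "\<dots> \<le> C_cc (V \<times> W) (cart_edges E F)"
    using C_cc_cart_swap_le fin nonempty by blast
  finally have lower:
    "max (card W * C_cc V E) (card V * C_cc W F) \<le> C_cc (V \<times> W) (cart_edges E F)"
    using C_cc_cart_lower fin nonempty by auto
  have upper: "C_cc (V \<times> W) (cart_edges E F) \<le> max (card W * C_cc V E) (card V * C_cc W F)"
    using C_cc_cart_upper assms(1,2,4,5) nonempty by blast
  show ?thesis
    unfolding cart_vertices_def by (rule antisym[OF upper lower])
qed

end
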